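(* Let $V_0>0$, $\alpha_1,\alpha_2>0$, $\delta_1\in\mathbb R$, and let $\gamma_1 = 1+\frac{1}{\mu}$, $\gamma_2 = 1-\frac{1}{\mu}$ for some $\mu>1$. Define \[ I \coloneqq \int_{V_0}^{0}\frac{dV}{-\alpha_1V^{\gamma_1}-\alpha_2V^{\gamma_2}+\delta_1V}. \] Then: (i) If $0\leq \delta_1<2\sqrt{\alpha_1\alpha_2}$, then \[ I\leq \frac{\mu}{\alpha_1k_1}\left(\frac{\pi}{2}-\tan^{-1}k_2\right), \] where $k_1 = \sqrt{\frac{4\alpha_1\alpha_2-\delta_1^2}{4\alpha_1^2}}$ and $k_2 = -\frac{\delta_1}{\sqrt{4\alpha_1\alpha_2-\delta_1^2}}$. (ii) If $\delta_1\geq 2\sqrt{\alpha_1\alpha_2}$ and $V_0^{1/\mu}\leq k\,\frac{\delta_1-\sqrt{\delta_1^2-4\alpha_1\alpha_2}}{2\alpha_1}$ for some $0<k<1$, then \[ I \leq \frac{\mu k}{(1-k)\sqrt{\alpha_1\alpha_2}}. \]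
   Context: $\tan^{-1}$ denotes the principal branch of the inverse tangent, with values in $(-\pi/2,\pi/2)$. *)

theory Defs
  imports "HOL-Analysis.Analysis"
begin

end

theory Submission
  imports Defs
begin

(* Substituting u = V^(1/mu) turns I into mu times the integral of 1/q(u), q(u) = alpha1 u^2 - delta1 u + alpha2,
   over [0, V0^(1/mu)].  If q has no real roots, 1/q has an arctan antiderivative, and bounding the arctan
   at the upper end by pi/2 gives (i).  If q has roots 0 < r1 <= r2, then u stays below k r1, and on [0, r1)
   we have (r2 - u) >= (r2/r1)(r1 - u), so 1/q(u) <= r1/(alpha1 r2 (r1 - u)^2); integrating gives
   U/(alpha1 r2 (r1 - U)) <= k/((1 - k) alpha1 r2) for U = V0^(1/mu), and alpha1 r2 >= sqrt(alpha1 alpha2). *)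

lemma interval_integral_mono_continuous:
  fixes f g :: "real \<Rightarrow> real" and a b :: real
  assumes "a \<le> b" "continuous_on {a..b} f" "continuous_on {a..b} g"
    and "\<And>x. a \<le> x \<Longrightarrow> x \<le> b \<Longrightarrow> f x \<le> g x"
  shows "(LBINT x=a..b. f x) \<le> (LBINT x=a..b. g x)"
  using assms unfolding interval_integral_Icc[OF assms(1)]
  by (intro set_integral_mono borel_integrable_atLeastAtMost') auto

lemma quadratic_completed_square:
  fixes a b c u :: real
  assumes "a \<noteq> 0"
  shows "a * u\<^sup>2 + b * u + c = ((2 * a * u + b)\<^sup>2 + (4 * a * c - b\<^sup>2)) / (4 * a)"
  using assms by (simp add: field_simps power2_eq_square)

lemma quadratic_factor_real_roots:
  fixes a b c u :: real
  assumes "a \<noteq> 0" "4 * a * c \<le> b\<^sup>2"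
  defines "t \<equiv> sqrt (b\<^sup>2 - 4 * a * c)"
  shows "a * u\<^sup>2 - b * u + c = a * (((b - t) / (2 * a) - u) * ((b + t) / (2 * a) - u))"
proof -
  have "t\<^sup>2 = b\<^sup>2 - 4 * a * c"
    using assms(2) by (simp add: t_def)
  then show ?thesis
    using assms(1) by (simp add: field_simps power2_eq_square, metis distrib_left)
qed

lemma interval_integral_inverse_quadratic_arctan:
  fixes a b c x y :: real
  assumes "b\<^sup>2 < 4 * a * c"
  defines "s \<equiv> sqrt (4 * a * c - b\<^sup>2)"
  shows "(LBINT u=x..y. 1 / (a * u\<^sup>2 + b * u + c))
           = 2 / s * (arctan ((2 * a * y + b) / s) - arctan ((2 * a * x + b) / s))"
proof -
  have s: "s > 0" "s\<^sup>2 = 4 * a * c - b\<^sup>2"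
    using assms(1) by (simp_all add: s_def)
  have "a \<noteq> 0"
    using assms(1) by (auto simp: power2_eq_square)
  then have q: "a * u\<^sup>2 + b * u + c = ((2 * a * u + b)\<^sup>2 + s\<^sup>2) / (4 * a)" for u
    by (simp add: quadratic_completed_square s(2))
  have q_nonzero: "a * u\<^sup>2 + b * u + c \<noteq> 0" for u
    using \<open>a \<noteq> 0\<close> s(1) unfolding q by (simp add: add_nonneg_pos)
  have deriv: "((\<lambda>u. 2 / s * arctan ((2 * a * u + b) / s)) has_real_derivative 1 / (a * u\<^sup>2 + b * u + c)) (at u)"
    for u
  proof -
    have "((\<lambda>u. 2 / s * arctan ((2 * a * u + b) / s)) has_real_derivative
            2 / s * (inverse (1 + ((2 * a * u + b) / s)\<^sup>2) * (2 * a / s))) (at u)"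
      using s(1) by (auto intro!: derivative_eq_intros)
    moreover have "2 / s * (inverse (1 + ((2 * a * u + b) / s)\<^sup>2) * (2 * a / s)) = 1 / (a * u\<^sup>2 + b * u + c)"
      unfolding q using s(1) \<open>a \<noteq> 0\<close> by (simp add: field_simps power2_eq_square add_pos_pos)
    ultimately show ?thesis by simp
  qed
  have "continuous_on {min x y..max x y} (\<lambda>u. 1 / (a * u\<^sup>2 + b * u + c))"
    using q_nonzero by (intro continuous_intros) auto
  then show ?thesis
    using deriv
    by (subst interval_integral_FTC_finite[where F = "\<lambda>u. 2 / s * arctan ((2 * a * u + b) / s)"])
      (auto simp: has_real_derivative_iff_has_vector_derivative[symmetric] has_field_derivative_at_within
        right_diff_distrib)
qed

lemma interval_integral_inverse_two_roots_le:
  fixes a r1 r2 U :: real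
  assumes "a > 0" "0 < r1" "r1 \<le> r2" "0 \<le> U" "U < r1"
  shows "(LBINT u=0..U. 1 / (a * ((r1 - u) * (r2 - u)))) \<le> U / (a * r2 * (r1 - U))"
proof -
  define C where "C = r1 / (a * r2)"
  have "(LBINT u=0..U. 1 / (a * ((r1 - u) * (r2 - u)))) \<le> (LBINT u=0..U. C / (r1 - u)\<^sup>2)"
    unfolding zero_ereal_def
  proof (rule interval_integral_mono_continuous)
    show "continuous_on {0..U} (\<lambda>u. 1 / (a * ((r1 - u) * (r2 - u))))"
      using assms by (auto intro!: continuous_intros)
    show "continuous_on {0..U} (\<lambda>u. C / (r1 - u)\<^sup>2)"
      using assms by (auto intro!: continuous_intros)
    fix u assume u: "0 \<le> u" "u \<le> U"
    have "r2 * (r1 - u) \<le> r1 * (r2 - u)"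
      using u assms by (simp add: algebra_simps mult_right_mono)
    then have "r2 * (r1 - u)\<^sup>2 \<le> r1 * ((r1 - u) * (r2 - u))"
      using u assms by (simp add: power2_eq_square mult_right_mono mult.assoc[symmetric])
    then show "1 / (a * ((r1 - u) * (r2 - u))) \<le> C / (r1 - u)\<^sup>2"
      using u assms unfolding C_def by (simp add: divide_simps)
  qed (use assms in simp)
  also have "\<dots> = C / (r1 - U) - C / (r1 - 0)"
    unfolding zero_ereal_def
  proof (rule interval_integral_FTC_finite)
    show "continuous_on {min 0 U..max 0 U} (\<lambda>u. C / (r1 - u)\<^sup>2)"
      using assms by (auto intro!: continuous_intros)
    fix u assume "min 0 U \<le> u" "u \<le> max 0 U"
    then have "u < r1" using assms by simp
    then have "((\<lambda>u. C / (r1 - u)) has_real_derivative C / (r1 - u)\<^sup>2) (at u)"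
      by (auto intro!: derivative_eq_intros simp: power2_eq_square)
    then show "((\<lambda>u. C / (r1 - u)) has_vector_derivative C / (r1 - u)\<^sup>2) (at u within {min 0 U..max 0 U})"
      by (simp add: has_real_derivative_iff_has_vector_derivative[symmetric] has_field_derivative_at_within)
  qed
  also have "\<dots> = U / (a * r2 * (r1 - U))"
    using assms unfolding C_def by (simp add: field_simps)
  finally show ?thesis .
qed

lemma interval_integral_powr_substitution:
  fixes h :: "real \<Rightarrow> real" and \<mu> V0 :: real
  assumes "\<mu> > 0" "V0 > 0"
    and cont: "continuous_on {0..V0 powr (1/\<mu>)} h"
    and nonneg: "\<And>u. 0 \<le> u \<Longrightarrow> u \<le> V0 powr (1/\<mu>) \<Longrightarrow> 0 \<le> h u"
  shows "set_integrable lborel (einterval 0 V0) (\<lambda>V. h (V powr (1/\<mu>)) * (V powr (1/\<mu>) / (\<mu> * V)))"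
    and "(LBINT V=0..V0. h (V powr (1/\<mu>)) * (V powr (1/\<mu>) / (\<mu> * V))) = (LBINT u=0..V0 powr (1/\<mu>). h u)"
proof -
  define U0 where "U0 = V0 powr (1/\<mu>)"
  define g where "g = (\<lambda>V. h (V powr (1/\<mu>)) * (V powr (1/\<mu>) / (\<mu> * V)))"
  have U0: "U0 > 0" "U0 powr \<mu> = V0"
    using assms(1,2) by (simp_all add: U0_def powr_powr)
  have inv: "(u powr \<mu>) powr (1/\<mu>) = u" if "u \<ge> 0" for u
    using that assms(1) by (simp add: powr_powr)
  (* Substitute V = u powr mu rather than u = V powr (1/mu): the library rule then needs integrability
     only on the u side, where the integrand is the continuous function h on a compact interval. *)
  have g_comp: "g (u powr \<mu>) * (\<mu> * u powr (\<mu> - 1)) = h u" if "u > 0" for u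
    using that assms(1) by (simp add: g_def inv powr_diff field_simps)
  have "set_integrable lborel (einterval 0 U0) h"
    using interval_integrable_continuous_on[of 0 U0 h] cont U0(1)
    by (simp add: U0_def interval_lebesgue_integrable_def zero_ereal_def[symmetric])
  moreover have "set_integrable lborel (einterval 0 U0) h =
      set_integrable lborel (einterval 0 U0) (\<lambda>u. g (u powr \<mu>) * (\<mu> * u powr (\<mu> - 1)))"
    by (rule set_integrable_cong) (auto simp: einterval_def g_comp)
  ultimately have int: "set_integrable lborel (einterval (ereal 0) (ereal U0)) (\<lambda>u. g (u powr \<mu>) * (\<mu> * u powr (\<mu> - 1)))"
    by (simp add: zero_ereal_def)
  have deriv: "((\<lambda>u. u powr \<mu>) has_real_derivative \<mu> * u powr (\<mu> - 1)) (at u)"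
    and cont_deriv: "isCont (\<lambda>u. \<mu> * u powr (\<mu> - 1)) u"
    and cont_g: "isCont g (u powr \<mu>)"
    and g_nonneg: "0 \<le> g (u powr \<mu>)"
    if "ereal 0 < ereal u" "ereal u < ereal U0" for u
  proof -
    from that have u: "0 < u" "u < U0" by auto
    show "((\<lambda>u. u powr \<mu>) has_real_derivative \<mu> * u powr (\<mu> - 1)) (at u)"
      using u by (auto intro!: derivative_eq_intros)
    show "isCont (\<lambda>u. \<mu> * u powr (\<mu> - 1)) u"
      using u by (auto intro!: continuous_intros)
    have "isCont h u"
      using u by (intro continuous_on_interior[OF cont]) (simp add: U0_def)
    then have "isCont h ((u powr \<mu>) powr (1/\<mu>))"
      using u by (simp add: inv)
    moreover have "isCont (\<lambda>V. V powr (1/\<mu>)) (u powr \<mu>)"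
      using u by (intro continuous_intros) auto
    ultimately have "isCont (\<lambda>V. h (V powr (1/\<mu>))) (u powr \<mu>)"
      by (rule isCont_o2[rotated])
    then show "isCont g (u powr \<mu>)"
      unfolding g_def using u assms(1) by (auto intro!: continuous_intros)
    show "0 \<le> g (u powr \<mu>)"
      using u nonneg[of u] assms(1) unfolding g_def U0_def by (simp add: inv)
  qed
  have "((\<lambda>u. u powr \<mu>) \<longlongrightarrow> 0 powr \<mu>) (at_right 0)"
    using assms(1) eventually_at_right_less[of "0::real"]
    by (intro tendsto_powr') (auto elim: eventually_mono)
  then have lim0: "((ereal \<circ> (\<lambda>u. u powr \<mu>) \<circ> real_of_ereal) \<longlongrightarrow> ereal 0) (at_right (ereal 0))"
    unfolding ereal_tendsto_simps by simp
  have limU0: "((ereal \<circ> (\<lambda>u. u powr \<mu>) \<circ> real_of_ereal) \<longlongrightarrow> ereal V0) (at_left (ereal U0))"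
    unfolding ereal_tendsto_simps U0(2)[symmetric] using U0(1) by (intro tendsto_intros) auto
  have deriv_nonneg: "0 \<le> \<mu> * u powr (\<mu> - 1)" for u
    using assms(1) by simp
  note subst = interval_integral_substitution_nonneg[of "ereal 0" "ereal U0" "\<lambda>u. u powr \<mu>" "\<lambda>u. \<mu> * u powr (\<mu> - 1)" g,
      OF _ deriv cont_g cont_deriv g_nonneg deriv_nonneg lim0 limU0 int]
  show "set_integrable lborel (einterval 0 V0) g"
    using subst(1) U0(1) by (simp add: zero_ereal_def)
  have "(LBINT V=0..V0. g V) = (LBINT u=0..U0. g (u powr \<mu>) * (\<mu> * u powr (\<mu> - 1)))"
    using subst(2) U0(1) by (simp add: zero_ereal_def)
  also have "\<dots> = (LBINT u=0..U0. h u)"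
    using U0(1) by (intro interval_integral_cong) (simp add: einterval_def g_comp)
  finally show "(LBINT V=0..V0. g V) = (LBINT u=0..V0 powr (1/\<mu>). h u)"
    by (simp add: U0_def)
qed

lemma neg_integrand_eq_quadratic:
  fixes V \<alpha>1 \<alpha>2 \<delta>1 \<mu> :: real
  assumes "V > 0" "\<mu> \<noteq> 0"
  shows "- (1 / (- \<alpha>1 * V powr (1 + 1/\<mu>) - \<alpha>2 * V powr (1 - 1/\<mu>) + \<delta>1 * V))
     = \<mu> / (\<alpha>1 * (V powr (1/\<mu>))\<^sup>2 - \<delta>1 * V powr (1/\<mu>) + \<alpha>2) * (V powr (1/\<mu>) / (\<mu> * V))"
proof -
  define u where "u = V powr (1/\<mu>)"
  have "u > 0" using assms by (simp add: u_def)
  have "V powr (1 + 1/\<mu>) = V * u" "V powr (1 - 1/\<mu>) = V / u"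
    using assms by (simp_all add: u_def powr_add powr_diff)
  then have denom: "- \<alpha>1 * V powr (1 + 1/\<mu>) - \<alpha>2 * V powr (1 - 1/\<mu>) + \<delta>1 * V
      = - (V / u) * (\<alpha>1 * u\<^sup>2 - \<delta>1 * u + \<alpha>2)"
    using \<open>u > 0\<close> by (simp add: field_simps power2_eq_square)
  show ?thesis
    unfolding denom u_def[symmetric] using assms \<open>u > 0\<close> by (simp add: field_simps)
qed

lemma integral_eq_quadratic_integral:
  fixes V0 \<alpha>1 \<alpha>2 \<delta>1 \<mu> :: real
  assumes "V0 > 0" "\<mu> > 0"
    and pos: "\<And>u. 0 \<le> u \<Longrightarrow> u \<le> V0 powr (1/\<mu>) \<Longrightarrow> \<alpha>1 * u\<^sup>2 - \<delta>1 * u + \<alpha>2 > 0"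
  defines "f \<equiv> \<lambda>V. 1 / (- \<alpha>1 * V powr (1 + 1/\<mu>) - \<alpha>2 * V powr (1 - 1/\<mu>) + \<delta>1 * V)"
  shows "interval_lebesgue_integrable lborel (ereal V0) (ereal 0) f"
    and "(LBINT V=ereal V0..ereal 0. f V) = \<mu> * (LBINT u=0..V0 powr (1/\<mu>). 1 / (\<alpha>1 * u\<^sup>2 - \<delta>1 * u + \<alpha>2))"
proof -
  define h where "h = (\<lambda>u. \<mu> * (1 / (\<alpha>1 * u\<^sup>2 - \<delta>1 * u + \<alpha>2)))"
  have "\<alpha>1 * u\<^sup>2 - \<delta>1 * u + \<alpha>2 \<noteq> 0" if "u \<in> {0..V0 powr (1/\<mu>)}" for u
    using pos that by force
  then have "continuous_on {0..V0 powr (1/\<mu>)} h"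
    unfolding h_def by (intro continuous_intros) auto
  note subst = interval_integral_powr_substitution[OF assms(2,1) this]
  have h_nonneg: "0 \<le> h u" if "0 \<le> u" "u \<le> V0 powr (1/\<mu>)" for u
    using pos[OF that] assms(2) by (simp add: h_def)
  have neg_f: "- f V = h (V powr (1/\<mu>)) * (V powr (1/\<mu>) / (\<mu> * V))" if "V \<in> einterval 0 V0" for V
    using that assms(2) unfolding f_def h_def by (subst neg_integrand_eq_quadratic) (auto simp: einterval_iff)
  have "set_integrable lborel (einterval 0 V0) (\<lambda>V. - f V)"
    using subst(1)[OF h_nonneg] by (subst set_integrable_cong[OF refl refl neg_f])
  then have "set_integrable lborel (einterval 0 V0) f"
    using set_integrable_mult_right[of "- 1" _ _ "\<lambda>V. - f V"] by simp
  then show "interval_lebesgue_integrable lborel (ereal V0) (ereal 0) f"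
    using assms(1) by (simp add: interval_lebesgue_integrable_def zero_ereal_def[symmetric])
  have "(LBINT V=ereal V0..ereal 0. f V) = (LBINT V=0..V0. - f V)"
    by (simp add: interval_integral_endpoints_reverse[of _ V0] interval_lebesgue_integral_uminus zero_ereal_def)
  also have "\<dots> = (LBINT V=0..V0. h (V powr (1/\<mu>)) * (V powr (1/\<mu>) / (\<mu> * V)))"
    using assms(1) by (intro interval_integral_cong) (simp add: neg_f)
  also have "\<dots> = (LBINT u=0..V0 powr (1/\<mu>). h u)"
    by (rule subst(2)[OF h_nonneg])
  also have "\<dots> = \<mu> * (LBINT u=0..V0 powr (1/\<mu>). 1 / (\<alpha>1 * u\<^sup>2 - \<delta>1 * u + \<alpha>2))"
    unfolding h_def by (rule interval_lebesgue_integral_mult_right)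
  finally show "(LBINT V=ereal V0..ereal 0. f V) = \<mu> * (LBINT u=0..V0 powr (1/\<mu>). 1 / (\<alpha>1 * u\<^sup>2 - \<delta>1 * u + \<alpha>2))" .
qed

lemma integral_le_complex_roots:
  fixes V0 \<alpha>1 \<alpha>2 \<delta>1 \<mu> :: real
  assumes "V0 > 0" "\<mu> > 0" "\<alpha>1 > 0" "\<delta>1\<^sup>2 < 4 * \<alpha>1 * \<alpha>2"
  defines "f \<equiv> \<lambda>V. 1 / (- \<alpha>1 * V powr (1 + 1/\<mu>) - \<alpha>2 * V powr (1 - 1/\<mu>) + \<delta>1 * V)"
    and "s \<equiv> sqrt (4 * \<alpha>1 * \<alpha>2 - \<delta>1\<^sup>2)"
  shows "interval_lebesgue_integrable lborel (ereal V0) (ereal 0) f"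
    and "(LBINT V=ereal V0..ereal 0. f V) \<le> 2 * \<mu> / s * (pi / 2 - arctan (- \<delta>1 / s))"
proof -
  have s: "s > 0"
    using assms(4) by (simp add: s_def)
  have "\<alpha>1 * u\<^sup>2 - \<delta>1 * u + \<alpha>2 > 0" for u
    using quadratic_completed_square[of \<alpha>1 u "- \<delta>1" \<alpha>2] assms(3,4)
    by (simp add: add_nonneg_pos)
  note reduction = integral_eq_quadratic_integral[OF assms(1,2) this]
  show "interval_lebesgue_integrable lborel (ereal V0) (ereal 0) f"
    unfolding f_def by (rule reduction(1))
  have "(LBINT V=ereal V0..ereal 0. f V) = \<mu> * (LBINT u=0..V0 powr (1/\<mu>). 1 / (\<alpha>1 * u\<^sup>2 - \<delta>1 * u + \<alpha>2))"
    unfolding f_def by (rule reduction(2))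
  also have "\<dots> = 2 * \<mu> / s * (arctan ((2 * \<alpha>1 * V0 powr (1/\<mu>) - \<delta>1) / s) - arctan (- \<delta>1 / s))"
    using interval_integral_inverse_quadratic_arctan[of "- \<delta>1" \<alpha>1 \<alpha>2 0 "V0 powr (1/\<mu>)"] assms(4)
    by (simp add: zero_ereal_def s_def)
  also have "\<dots> \<le> 2 * \<mu> / s * (pi / 2 - arctan (- \<delta>1 / s))"
    using s assms(2) arctan_ubound by (intro mult_left_mono) (auto simp: less_imp_le)
  finally show "(LBINT V=ereal V0..ereal 0. f V) \<le> 2 * \<mu> / s * (pi / 2 - arctan (- \<delta>1 / s))" .
qed

lemma integral_le_real_roots:
  fixes V0 \<alpha>1 \<alpha>2 \<delta>1 \<mu> k :: real
  assumes "V0 > 0" "\<mu> > 0" "\<alpha>1 > 0" "\<alpha>2 > 0" "k < 1" "2 * sqrt (\<alpha>1 * \<alpha>2) \<le> \<delta>1"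
  defines "f \<equiv> \<lambda>V. 1 / (- \<alpha>1 * V powr (1 + 1/\<mu>) - \<alpha>2 * V powr (1 - 1/\<mu>) + \<delta>1 * V)"
    and "r1 \<equiv> (\<delta>1 - sqrt (\<delta>1\<^sup>2 - 4 * \<alpha>1 * \<alpha>2)) / (2 * \<alpha>1)"
  assumes V0_le: "V0 powr (1/\<mu>) \<le> k * r1"
  shows "interval_lebesgue_integrable lborel (ereal V0) (ereal 0) f"
    and "(LBINT V=ereal V0..ereal 0. f V) \<le> \<mu> * k / ((1 - k) * sqrt (\<alpha>1 * \<alpha>2))"
proof -
  define t where "t = sqrt (\<delta>1\<^sup>2 - 4 * \<alpha>1 * \<alpha>2)"
  define r2 where "r2 = (\<delta>1 + t) / (2 * \<alpha>1)"
  define U0 where "U0 = V0 powr (1/\<mu>)"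
  have sqrt_pos: "sqrt (\<alpha>1 * \<alpha>2) > 0"
    using assms(3,4) by simp
  have "4 * \<alpha>1 * \<alpha>2 = (2 * sqrt (\<alpha>1 * \<alpha>2))\<^sup>2"
    using assms(3,4) by (simp add: power_mult_distrib)
  also have "\<dots> \<le> \<delta>1\<^sup>2"
    using assms(6) sqrt_pos by (intro power_mono) auto
  finally have discr: "4 * \<alpha>1 * \<alpha>2 \<le> \<delta>1\<^sup>2" .
  have "\<delta>1 > 0"
    using assms(6) sqrt_pos by linarith
  have "t\<^sup>2 < \<delta>1\<^sup>2" "t \<ge> 0"
    using discr assms(3,4) by (simp_all add: t_def)
  then have "t < \<delta>1"
    using \<open>\<delta>1 > 0\<close> by (simp add: power_less_imp_less_base)
  then have r1: "0 < r1" "r1 \<le> r2"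
    using \<open>t \<ge> 0\<close> assms(3) by (simp_all add: r1_def r2_def t_def divide_right_mono)
  have "k * r1 < r1"
    using assms(5) r1 by simp
  then have U0: "0 < U0" "U0 \<le> k * r1" "U0 < r1"
    using assms(1) V0_le by (simp_all add: U0_def)
  have factor: "\<alpha>1 * u\<^sup>2 - \<delta>1 * u + \<alpha>2 = \<alpha>1 * ((r1 - u) * (r2 - u))" for u
    using quadratic_factor_real_roots[OF _ discr, of u] assms(3) by (simp add: r1_def r2_def t_def)
  have "\<alpha>1 * u\<^sup>2 - \<delta>1 * u + \<alpha>2 > 0" if "0 \<le> u" "u \<le> U0" for u
    unfolding factor using that U0 r1 assms(3) by simp
  note reduction = integral_eq_quadratic_integral[OF assms(1,2) this[unfolded U0_def]]
  show "interval_lebesgue_integrable lborel (ereal V0) (ereal 0) f"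
    unfolding f_def by (rule reduction(1))
  have "(LBINT V=ereal V0..ereal 0. f V) = \<mu> * (LBINT u=0..U0. 1 / (\<alpha>1 * u\<^sup>2 - \<delta>1 * u + \<alpha>2))"
    unfolding f_def U0_def by (rule reduction(2))
  also have "\<dots> = \<mu> * (LBINT u=0..U0. 1 / (\<alpha>1 * ((r1 - u) * (r2 - u))))"
    unfolding factor ..
  also have "\<dots> \<le> \<mu> * (U0 / (\<alpha>1 * r2 * (r1 - U0)))"
    using assms(2,3) r1 U0 by (intro mult_left_mono interval_integral_inverse_two_roots_le) auto
  also have "\<dots> = \<mu> / (\<alpha>1 * r2) * (U0 / (r1 - U0))"
    by simp
  also have "\<dots> \<le> \<mu> / sqrt (\<alpha>1 * \<alpha>2) * (k / (1 - k))"
  proof (intro mult_mono)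
    have "sqrt (\<alpha>1 * \<alpha>2) \<le> \<alpha>1 * r2"
      unfolding r2_def using assms(3,6) \<open>t \<ge> 0\<close> by simp
    then show "\<mu> / (\<alpha>1 * r2) \<le> \<mu> / sqrt (\<alpha>1 * \<alpha>2)"
      using assms(2,3) sqrt_pos r1 by (intro divide_left_mono mult_pos_pos) auto
    have "U0 * (1 - k) \<le> k * (r1 - U0)"
      using U0(2) by (simp add: algebra_simps)
    then show "U0 / (r1 - U0) \<le> k / (1 - k)"
      using U0(3) assms(5) by (simp add: field_simps)
  qed (use assms(2) U0 sqrt_pos in auto)
  finally show "(LBINT V=ereal V0..ereal 0. f V) \<le> \<mu> * k / ((1 - k) * sqrt (\<alpha>1 * \<alpha>2))"
    by (simp add: mult.commute)
qed

theorem lemma2: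
  fixes V0 \<alpha>1 \<alpha>2 \<delta>1 \<mu> :: real
  assumes "V0 > 0" and "\<alpha>1 > 0" and "\<alpha>2 > 0" and "\<mu> > 1"
  defines "\<gamma>1 \<equiv> 1 + 1 / \<mu>" and "\<gamma>2 \<equiv> 1 - 1 / \<mu>"
  defines "f \<equiv> (\<lambda>V::real. 1 / (- \<alpha>1 * V powr \<gamma>1 - \<alpha>2 * V powr \<gamma>2 + \<delta>1 * V))"
  defines "I \<equiv> (LBINT V=ereal V0..ereal 0. f V)"
  shows "(0 \<le> \<delta>1 \<and> \<delta>1 < 2 * sqrt (\<alpha>1 * \<alpha>2) \<longrightarrow>
           (let k1 = sqrt ((4 * \<alpha>1 * \<alpha>2 - \<delta>1\<^sup>2) / (4 * \<alpha>1\<^sup>2));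
                k2 = - \<delta>1 / sqrt (4 * \<alpha>1 * \<alpha>2 - \<delta>1\<^sup>2)
            in interval_lebesgue_integrable lborel (ereal V0) (ereal 0) f \<and>
               I \<le> \<mu> / (\<alpha>1 * k1) * (pi / 2 - arctan k2)))
       \<and> (\<forall>k::real. 0 < k \<and> k < 1 \<and> \<delta>1 \<ge> 2 * sqrt (\<alpha>1 * \<alpha>2) \<and>
              V0 powr (1 / \<mu>) \<le> k * ((\<delta>1 - sqrt (\<delta>1\<^sup>2 - 4 * \<alpha>1 * \<alpha>2)) / (2 * \<alpha>1)) \<longrightarrow>
            interval_lebesgue_integrable lborel (ereal V0) (ereal 0) f \<and>
            I \<le> \<mu> * k / ((1 - k) * sqrt (\<alpha>1 * \<alpha>2)))"
proof -
  have f_eq: "f = (\<lambda>V. 1 / (- \<alpha>1 * V powr (1 + 1/\<mu>) - \<alpha>2 * V powr (1 - 1/\<mu>) + \<delta>1 * V))"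
    unfolding f_def \<gamma>1_def \<gamma>2_def ..
  have "\<mu> > 0"
    using assms(4) by simp
  have complex_roots: "interval_lebesgue_integrable lborel (ereal V0) (ereal 0) f \<and>
      I \<le> \<mu> / (\<alpha>1 * sqrt ((4 * \<alpha>1 * \<alpha>2 - \<delta>1\<^sup>2) / (4 * \<alpha>1\<^sup>2)))
        * (pi / 2 - arctan (- \<delta>1 / sqrt (4 * \<alpha>1 * \<alpha>2 - \<delta>1\<^sup>2)))"
    if "0 \<le> \<delta>1" "\<delta>1 < 2 * sqrt (\<alpha>1 * \<alpha>2)"
  proof -
    have "\<delta>1\<^sup>2 < (2 * sqrt (\<alpha>1 * \<alpha>2))\<^sup>2"
      using that by (intro power_strict_mono) auto
    then have discr: "\<delta>1\<^sup>2 < 4 * \<alpha>1 * \<alpha>2"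
      using assms(2,3) by (simp add: power_mult_distrib)
    have "\<alpha>1 * sqrt ((4 * \<alpha>1 * \<alpha>2 - \<delta>1\<^sup>2) / (4 * \<alpha>1\<^sup>2)) = sqrt (4 * \<alpha>1 * \<alpha>2 - \<delta>1\<^sup>2) / 2"
      using assms(2) by (simp add: real_sqrt_divide real_sqrt_mult)
    then have k1: "\<mu> / (\<alpha>1 * sqrt ((4 * \<alpha>1 * \<alpha>2 - \<delta>1\<^sup>2) / (4 * \<alpha>1\<^sup>2)))
        = 2 * \<mu> / sqrt (4 * \<alpha>1 * \<alpha>2 - \<delta>1\<^sup>2)"
      by (metis divide_divide_eq_right mult.commute)
    show ?thesis
      unfolding I_def f_eq k1 using integral_le_complex_roots[OF assms(1) \<open>\<mu> > 0\<close> assms(2) discr] ..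
  qed
  have real_roots: "interval_lebesgue_integrable lborel (ereal V0) (ereal 0) f \<and>
      I \<le> \<mu> * k / ((1 - k) * sqrt (\<alpha>1 * \<alpha>2))"
    if "k < 1" "2 * sqrt (\<alpha>1 * \<alpha>2) \<le> \<delta>1"
      "V0 powr (1 / \<mu>) \<le> k * ((\<delta>1 - sqrt (\<delta>1\<^sup>2 - 4 * \<alpha>1 * \<alpha>2)) / (2 * \<alpha>1))" for k
    unfolding I_def f_eq using integral_le_real_roots[OF assms(1) \<open>\<mu> > 0\<close> assms(2,3) that] ..
  show ?thesis
    using complex_roots real_roots unfolding Let_def by blast
qed

end
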